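(* Let $\kappa:\mathbb{R}^2\to[0,\infty]$ be a normalized surface density (a gravitational lens) satisfying the conditions listed in the context. Then $\kappa(x)<\kappa(0)$ for all $x>0$, where for a singular lens $\kappa(0)=+\infty$.
   Context: A gravitational lens (in a single lens plane) is given by a normalized surface density $\kappa$ on the plane $\mathbb{R}^2$ satisfying: (i) Continuity: $\kappa:\mathbb{R}^2\to\mathbb{R}_0^+=[0,\infty)$ is continuous, except possibly at the origin for singular lenses. (ii) Circular symmetry: $\kappa$ depends only on the radius $x=\|\mathbf{x}\|$; write $\kappa=\kappa(x)$. (iii) Finiteness: $\kappa(x)<\infty$ for $x>0$; $\kappa(0)=1/C_1$ for a constant $C_1\ge 0$ (so $\kappa(0)=+\infty$ when $C_1=0$); and $\lim_{x\to\infty}\kappa(x)\,x=C_2$ for a constant $0\le C_2<\infty$. (iv) Self-gravitation: $\kappa(x)<\bar\kappa(x)$ for $x>0$, where $\bar\kappa(x)=\frac{2}{x^2}\int_0^x\kappa(t)\,t\,dt$ is the mean surface density inside radius $x$. The lens is called singular if and only if $C_1=0$, and non-singular otherwise. *)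

theory Defs
  imports "HOL-Analysis.Analysis"
begin

text \<open>A circularly symmetric lens is represented by its radial profile
  k :: real => real (k x = kappa at radius x, for x > 0) together with the
  constants C1, C2.  The central value kappa(0) = 1/C1 is an extended real,
  equal to +infinity when C1 = 0 (singular lens).\<close>

definition kappa0 :: "real \<Rightarrow> ereal" where
  "kappa0 C1 = (if C1 = 0 then \<infinity> else ereal (1 / C1))"

definition mean_density :: "(real \<Rightarrow> real) \<Rightarrow> real \<Rightarrow> real" where
  "mean_density k x = 2 / x\<^sup>2 * integral {0..x} (\<lambda>t. k t * t)"

definition is_lens :: "(real \<Rightarrow> real) \<Rightarrow> real \<Rightarrow> real \<Rightarrow> bool" where
  "is_lens k C1 C2 \<longleftrightarrow>
     \<comment> \<open>nonnegative and finite away from the origin\<close>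
     (\<forall>x>0. 0 \<le> k x) \<and>
     \<comment> \<open>(i) continuity away from the origin\<close>
     continuous_on {0<..} k \<and>
     \<comment> \<open>(i)+(iii) non-singular lenses are continuous at the origin, kappa(0) = 1/C1\<close>
     (C1 \<noteq> 0 \<longrightarrow> (k \<longlongrightarrow> 1 / C1) (at_right 0)) \<and>
     \<comment> \<open>(iii) constants\<close>
     0 \<le> C1 \<and> 0 \<le> C2 \<and>
     ((\<lambda>x. k x * x) \<longlongrightarrow> C2) at_top \<and>
     \<comment> \<open>the mean density is well defined\<close>
     (\<forall>x>0. (\<lambda>t. k t * t) integrable_on {0..x}) \<and>
     \<comment> \<open>(iv) self-gravitation\<close>
     (\<forall>x>0. k x < mean_density k x)"

end

theory Submission
  imports Defs
begin

text \<open>The mean density over radius y is at most any bound M of kappa on (0, y], so by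
  self-gravitation kappa can never attain its maximum over [0, x] at a positive radius.
  Extending kappa continuously by kappa(0) = 1/C1, the maximum over the compact interval
  [0, x] is therefore attained only at the centre, giving kappa(x) < kappa(0); for a
  singular lens there is nothing to prove.\<close>

lemma mean_density_le_bound:
  fixes k :: "real \<Rightarrow> real" and y M :: real
  assumes "0 < y" and "(\<lambda>t. k t * t) integrable_on {0..y}" and "\<forall>s\<in>{0<..y}. k s \<le> M"
  shows "mean_density k y \<le> M"
proof -
  have "integral {0..y} (\<lambda>t. k t * t) \<le> integral {0..y} (\<lambda>t. M * t)"
  proof (rule integral_le[OF assms(2)])
    show "(\<lambda>t. M * t) integrable_on {0..y}"
      by (intro integrable_continuous_real continuous_intros)
    show "k s * s \<le> M * s" if "s \<in> {0..y}" for s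
      using that assms(3) by (cases "s = 0") (auto intro: mult_right_mono)
  qed
  also have "\<dots> = M * y\<^sup>2 / 2"
    using assms(1) by simp
  finally show ?thesis
    using assms(1) by (simp add: mean_density_def field_simps)
qed

lemma self_gravitating_exceeded_inside:
  fixes k :: "real \<Rightarrow> real" and y :: real
  assumes "0 < y" and "(\<lambda>t. k t * t) integrable_on {0..y}" and "k y < mean_density k y"
  shows "\<exists>s\<in>{0<..y}. k y < k s"
proof (rule ccontr)
  assume "\<not> (\<exists>s\<in>{0<..y}. k y < k s)"
  then have "mean_density k y \<le> k y"
    by (intro mean_density_le_bound[OF assms(1,2)]) (auto simp: not_less)
  with assms(3) show False
    by simp
qed

lemma continuous_on_Icc_fun_upd_at_right:
  fixes f :: "real \<Rightarrow> 'b::topological_space" and a b :: real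
  assumes cont: "continuous_on {a<..} f" and lim: "(f \<longlongrightarrow> c) (at_right a)" and "a < b"
  shows "continuous_on {a..b} (f(a := c))"
proof (rule continuous_on_IccI)
  have "\<forall>\<^sub>F s in at_right a. f s = (f(a := c)) s"
    by (auto simp: eventually_at_filter)
  then show "((f(a := c)) \<longlongrightarrow> (f(a := c)) a) (at_right a)"
    using tendsto_cong lim by fastforce
  have upd_tendsto: "((f(a := c)) \<longlongrightarrow> (f(a := c)) t) (at t within S)" if "a < t" for t S
  proof -
    have "isCont f t"
      using cont that by (simp add: continuous_on_eq_continuous_at)
    moreover have "\<forall>\<^sub>F s in nhds t. a < s"
      using that by (intro eventually_nhds_in_open[of "{a<..}", simplified]) auto
    then have "\<forall>\<^sub>F s in nhds t. f s = (f(a := c)) s"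
      by eventually_elim auto
    ultimately have "isCont (f(a := c)) t"
      using isCont_cong by blast
    then show ?thesis
      unfolding isCont_def by (rule tendsto_within_subset) simp
  qed
  show "((f(a := c)) \<longlongrightarrow> (f(a := c)) b) (at_left b)"
    using upd_tendsto \<open>a < b\<close> by blast
  show "(f(a := c)) \<midarrow>t\<rightarrow> (f(a := c)) t" if "a < t" for t
    using upd_tendsto[OF that, of UNIV] by simp
qed fact

lemma self_gravitating_below_central_limit:
  fixes k :: "real \<Rightarrow> real" and c x :: real
  assumes cont: "continuous_on {0<..} k" and lim: "(k \<longlongrightarrow> c) (at_right 0)"
    and int: "\<forall>y>0. (\<lambda>t. k t * t) integrable_on {0..y}"
    and self_grav: "\<forall>y>0. k y < mean_density k y"
    and "0 < x"
  shows "k x < c"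
proof -
  define g where "g = k(0 := c)"
  have no_positive_max: "\<not> (\<forall>s\<in>{0..x}. g s \<le> g y)" if "y \<in> {0<..x}" for y
  proof
    assume max: "\<forall>s\<in>{0..x}. g s \<le> g y"
    from that have "0 < y"
      by simp
    then obtain s where "s \<in> {0<..y}" and "k y < k s"
      using self_gravitating_exceeded_inside[of y k] int self_grav by blast
    moreover have "g s \<le> g y"
      using max \<open>s \<in> {0<..y}\<close> that by auto
    ultimately show False
      using \<open>0 < y\<close> \<open>s \<in> {0<..y}\<close> by (simp add: g_def)
  qed
  have g_cont: "continuous_on {0..x} g"
    unfolding g_def using continuous_on_Icc_fun_upd_at_right[OF cont lim \<open>0 < x\<close>] .
  obtain y where y: "y \<in> {0..x}" and max: "\<forall>s\<in>{0..x}. g s \<le> g y"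
    using continuous_attains_sup[OF compact_Icc _ g_cont] \<open>0 < x\<close> by auto
  have "y = 0"
    using no_positive_max[of y] max y by (cases "0 < y") auto
  have "g x \<le> g 0"
    using bspec[OF max, of x] \<open>y = 0\<close> \<open>0 < x\<close> by simp
  then have "k x \<le> c"
    using \<open>0 < x\<close> by (simp add: g_def)
  moreover have "k x \<noteq> c"
  proof
    assume "k x = c"
    then have "\<forall>s\<in>{0..x}. g s \<le> g x"
      using max \<open>y = 0\<close> \<open>0 < x\<close> by (simp add: g_def)
    with no_positive_max[of x] \<open>0 < x\<close> show False
      by simp
  qed
  ultimately show ?thesis
    by simp
qed

theorem lemma1:
  fixes k :: "real \<Rightarrow> real" and C1 C2 x :: real
  assumes "is_lens k C1 C2" and "x > 0"
  shows "ereal (k x) < kappa0 C1"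
proof (cases "C1 = 0")
  case True
  then show ?thesis
    by (simp add: kappa0_def)
next
  case False
  with assms have "k x < 1 / C1"
    by (intro self_gravitating_below_central_limit[where k = k]) (auto simp: is_lens_def)
  with False show ?thesis
    by (simp add: kappa0_def)
qed

end
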